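(* For every integer $N\ge16$, \[ h(N)\le \lfloor\sqrt{N}\rfloor+\big\lfloor\sqrt{\lfloor\sqrt{N}\rfloor}\big\rfloor+2. \]
   Context: A finite set $A\subseteq\mathbb{Z}$ is Sidon if $a+b=c+d$ with $a,b,c,d\in A$ implies $\{a,b\}=\{c,d\}$ as unordered pairs. For a natural number $N$, $h(N)=\max\{|A| : A\subseteq\{1,\dots,N\},\ A\text{ Sidon}\}$. *)

theory Defs
  imports Complex_Main
begin

definition sidon :: "int set \<Rightarrow> bool" where
  "sidon A \<longleftrightarrow> finite A \<and>
     (\<forall>a\<in>A. \<forall>b\<in>A. \<forall>c\<in>A. \<forall>d\<in>A. a + b = c + d \<longrightarrow> {a, b} = {c, d})"

definition h :: "nat \<Rightarrow> nat" where
  "h N = Max {card A | A. A \<subseteq> {1..int N} \<and> sidon A}"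

end

theory Submission
  imports Defs "HOL-Analysis.Convex"
begin

text \<open>Slide a window of length \<open>u\<close> over \<open>{2 - u..N}\<close> and let \<open>a\<^sub>m\<close> count the elements of
  the Sidon set \<open>A\<close> in the \<open>m\<close>-th window. Then \<open>\<Sum> a\<^sub>m = |A| u\<close>, while \<open>\<Sum> a\<^sub>m\<^sup>2\<close> counts
  each pair \<open>(x, y) \<in> A\<^sup>2\<close> with weight \<open>max 0 (u - |x - y|)\<close>, the number of windows containing
  both. The differences \<open>x - y\<close> with \<open>x \<noteq> y\<close> of a Sidon set are pairwise distinct, so
  \<open>\<Sum> a\<^sub>m\<^sup>2 \<le> |A| u + u\<^sup>2 - u\<close>, and Cauchy-Schwarz over the \<open>N + u - 1\<close> windows gives
  \<open>|A|\<^sup>2 u \<le> (N + u - 1) (|A| + u - 1)\<close>. Taking \<open>u = s r\<close> with \<open>s = \<lfloor>\<surd>N\<rfloor>\<close> and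
  \<open>r = \<lfloor>\<surd>s\<rfloor>\<close>, this quadratic inequality in \<open>|A|\<close> fails for \<open>|A| = s + r + 3\<close> and
  beyond.\<close>

lemma sidon_finite: "sidon A \<Longrightarrow> finite A"
  by (simp add: sidon_def)

lemma sidon_diff_inj_on:
  assumes "sidon A"
  shows "inj_on (\<lambda>(x, y). x - y) (SIGMA x:A. A - {x})"
proof (rule inj_onI)
  fix p q
  assume "p \<in> (SIGMA x:A. A - {x})" "q \<in> (SIGMA x:A. A - {x})"
    and eq: "(\<lambda>(x, y). x - y) p = (\<lambda>(x, y). x - y) q"
  then obtain x y x' y' where pq: "p = (x, y)" "q = (x', y')"
    and A: "x \<in> A" "y \<in> A" "x' \<in> A" "y' \<in> A" and "x \<noteq> y"
    by auto
  from eq have "x + y' = x' + y" by (simp add: pq)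
  then have "{x, y'} = {x', y}"
    using assms A unfolding sidon_def by blast
  then show "p = q"
    using \<open>x \<noteq> y\<close> by (auto simp: doubleton_eq_iff pq)
qed

lemma sum_card_Int_eq:
  assumes "finite A" "finite M"
  shows "(\<Sum>m\<in>M. card (A \<inter> W m)) = (\<Sum>x\<in>A. card {m\<in>M. x \<in> W m})"
proof -
  have "(\<Sum>m\<in>M. card (A \<inter> W m)) = (\<Sum>m\<in>M. \<Sum>x\<in>A. of_bool (x \<in> W m))"
    using assms by (simp add: Int_def)
  also have "\<dots> = (\<Sum>x\<in>A. \<Sum>m\<in>M. of_bool (x \<in> W m))"
    by (rule sum.swap)
  also have "\<dots> = (\<Sum>x\<in>A. card {m\<in>M. x \<in> W m})"
    using assms by (simp add: Int_def)
  finally show ?thesis .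
qed

lemma sum_card_Int_squared_eq:
  assumes "finite A" "finite M"
  shows "(\<Sum>m\<in>M. (card (A \<inter> W m))\<^sup>2) = (\<Sum>x\<in>A. \<Sum>y\<in>A. card {m\<in>M. x \<in> W m \<and> y \<in> W m})"
proof -
  have "card (A \<inter> W m) = (\<Sum>x\<in>A. of_bool (x \<in> W m))" for m
    using assms by (simp add: Int_def)
  then have "(\<Sum>m\<in>M. (card (A \<inter> W m))\<^sup>2)
      = (\<Sum>m\<in>M. \<Sum>x\<in>A. \<Sum>y\<in>A. of_bool (x \<in> W m \<and> y \<in> W m))"
    by (simp add: power2_eq_square sum_product flip: of_bool_conj)
  also have "\<dots> = (\<Sum>x\<in>A. \<Sum>y\<in>A. \<Sum>m\<in>M. of_bool (x \<in> W m \<and> y \<in> W m))"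
    by (subst sum.swap) (simp add: sum.swap[of _ M])
  also have "\<dots> = (\<Sum>x\<in>A. \<Sum>y\<in>A. card {m\<in>M. x \<in> W m \<and> y \<in> W m})"
    using assms by (simp add: Int_def)
  finally show ?thesis .
qed

lemma card_windows_containing:
  fixes x y N :: int and u :: nat
  assumes "x \<in> {1..N}" "y \<in> {1..N}"
  shows "card {m \<in> {2 - int u..N}. x \<in> {m..m + int u - 1} \<and> y \<in> {m..m + int u - 1}}
    = u - nat \<bar>x - y\<bar>"
proof -
  have "{m \<in> {2 - int u..N}. x \<in> {m..m + int u - 1} \<and> y \<in> {m..m + int u - 1}}
      = {max x y - int u + 1..min x y}"
    using assms by auto
  then show ?thesis by simp
qed

lemma sum_tent_eq_square:
  "(\<Sum>d\<in>{-int n..int n}. n - nat \<bar>d\<bar>) = n\<^sup>2"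
proof (induction n)
  case 0
  then show ?case by simp
next
  case (Suc n)
  have "{-int (Suc n)..int (Suc n)} = insert (-int (Suc n)) (insert (int (Suc n)) {-int n..int n})"
    by auto
  then have "(\<Sum>d\<in>{-int (Suc n)..int (Suc n)}. Suc n - nat \<bar>d\<bar>)
      = (\<Sum>d\<in>{-int n..int n}. (n - nat \<bar>d\<bar>) + 1)"
    by (simp add: Suc_diff_le nat_le_iff) (rule sum.cong; auto)
  also have "\<dots> = n\<^sup>2 + (2 * n + 1)"
    by (simp only: sum.distrib Suc.IH) simp
  finally show ?case by (simp add: power2_eq_square)
qed

lemma sidon_sum_tent_le:
  fixes u :: nat
  assumes "sidon A"
  shows "(\<Sum>x\<in>A. \<Sum>y\<in>A. u - nat \<bar>x - y\<bar>) \<le> card A * u + (u\<^sup>2 - u)"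
proof -
  define f where "f d = u - nat \<bar>d\<bar>" for d :: int
  define P where "P = (SIGMA x:A. A - {x})"
  define D where "D = (\<lambda>(x, y). x - y) ` P"
  have fin: "finite A" using assms by (rule sidon_finite)
  have "(\<Sum>x\<in>A. \<Sum>y\<in>A. f (x - y)) = (\<Sum>x\<in>A. u + (\<Sum>y\<in>A - {x}. f (x - y)))"
    using fin by (intro sum.cong) (simp_all add: sum.remove f_def)
  also have "\<dots> = card A * u + (\<Sum>(x, y)\<in>P. f (x - y))"
    using fin by (simp add: sum.distrib sum.Sigma P_def)
  also have "(\<Sum>(x, y)\<in>P. f (x - y)) = (\<Sum>d\<in>D. f d)"
    using sum.reindex[OF sidon_diff_inj_on[OF assms], of f]
    by (simp add: D_def P_def case_prod_unfold comp_def)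
  also have "\<dots> = (\<Sum>d\<in>D \<inter> {-int u..int u}. f d)"
    using fin by (intro sum.mono_neutral_right) (auto simp: D_def P_def f_def)
  also have "\<dots> \<le> (\<Sum>d\<in>{-int u..int u} - {0}. f d)"
    by (intro sum_mono2) (auto simp: D_def P_def)
  also have "\<dots> = u\<^sup>2 - u"
    using sum_tent_eq_square[of u] by (simp add: sum_diff1_nat f_def)
  finally show ?thesis by (simp add: f_def)
qed

lemma sidon_window_inequality:
  fixes A :: "int set" and N u :: nat
  assumes "sidon A" and "A \<subseteq> {1..int N}" and "u \<ge> 1"
  shows "(card A)\<^sup>2 * u \<le> (N + u - 1) * (card A + u - 1)"
proof -
  define M where "M = {2 - int u..int N}"
  define W where "W m = {m..m + int u - 1}" for m
  define a where "a m = card (A \<inter> W m)" for m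
  define k where "k = card A"
  have fin: "finite A" using assms(1) by (rule sidon_finite)
  have windows: "card {m\<in>M. x \<in> W m \<and> y \<in> W m} = u - nat \<bar>x - y\<bar>" if "x \<in> A" "y \<in> A" for x y
    using card_windows_containing[of x "int N" y u] that assms(2) by (simp add: M_def W_def subset_iff)
  have sum_a: "(\<Sum>m\<in>M. a m) = k * u"
  proof -
    have "(\<Sum>m\<in>M. a m) = (\<Sum>x\<in>A. card {m\<in>M. x \<in> W m})"
      using sum_card_Int_eq[OF fin, of M W] by (simp add: a_def M_def)
    also have "\<dots> = (\<Sum>x\<in>A. u)"
      using windows[of x x for x] by simp
    finally show ?thesis by (simp add: k_def)
  qed
  have sum_a_squared: "(\<Sum>m\<in>M. (a m)\<^sup>2) \<le> u * (k + u - 1)"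
  proof -
    have "(\<Sum>m\<in>M. (a m)\<^sup>2) = (\<Sum>x\<in>A. \<Sum>y\<in>A. u - nat \<bar>x - y\<bar>)"
      using sum_card_Int_squared_eq[OF fin, of M W] windows by (simp add: a_def M_def)
    also have "\<dots> \<le> k * u + (u\<^sup>2 - u)"
      using sidon_sum_tent_le[OF assms(1)] by (simp add: k_def)
    also have "\<dots> = u * (k + u - 1)"
      using assms(3) by (simp add: power2_eq_square algebra_simps diff_mult_distrib2)
    finally show ?thesis .
  qed
  have "real ((\<Sum>m\<in>M. a m)\<^sup>2) \<le> real ((\<Sum>m\<in>M. (a m)\<^sup>2) * card M)"
    using sum_squared_le_sum_of_squares[of "\<lambda>m. real (a m)" M] by simp
  then have "(\<Sum>m\<in>M. a m)\<^sup>2 \<le> (\<Sum>m\<in>M. (a m)\<^sup>2) * card M"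
    by (simp only: of_nat_le_iff)
  have card_M: "card M = N + u - 1"
    unfolding M_def by simp
  have "u * (k\<^sup>2 * u) = (\<Sum>m\<in>M. a m)\<^sup>2"
    by (simp add: sum_a power2_eq_square)
  also have "\<dots> \<le> (\<Sum>m\<in>M. (a m)\<^sup>2) * card M" by fact
  also have "\<dots> \<le> u * (k + u - 1) * (N + u - 1)"
    unfolding card_M by (rule mult_right_mono[OF sum_a_squared]) simp
  finally have "u * (k\<^sup>2 * u) \<le> u * ((N + u - 1) * (k + u - 1))"
    by (simp add: ac_simps)
  then show ?thesis
    using assms(3) by (simp add: k_def)
qed

lemma quadratic_ineq_imp_less:
  fixes k k0 u C :: int
  assumes "k\<^sup>2 * u \<le> C * (k + u - 1)" and "C * (k0 + u - 1) < k0\<^sup>2 * u"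
    and "C \<le> 2 * k0 * u" and "0 \<le> u"
  shows "k < k0"
proof (rule ccontr)
  assume "\<not> k < k0"
  then have "2 * k0 * u \<le> (k + k0) * u"
    using \<open>0 \<le> u\<close> by (intro mult_right_mono) auto
  with \<open>\<not> k < k0\<close> have "0 \<le> (k - k0) * ((k + k0) * u - C)"
    using assms(3) by (intro mult_nonneg_nonneg) auto
  moreover have "k\<^sup>2 * u - C * (k + u - 1)
      = k0\<^sup>2 * u - C * (k0 + u - 1) + (k - k0) * ((k + k0) * u - C)"
    by (simp add: power2_eq_square algebra_simps)
  ultimately show False
    using assms(1,2) by linarith
qed

lemma card_bound_from_window_inequality:
  fixes n s r k :: int
  assumes "2 \<le> r" and "r\<^sup>2 \<le> s" and "s \<le> r\<^sup>2 + 2 * r" and "n \<le> s\<^sup>2 + 2 * s"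
    and "k\<^sup>2 * (s * r) \<le> (n + s * r - 1) * (k + s * r - 1)"
  shows "k \<le> s + r + 2"
proof -
  define u where "u = s * r"
  define k0 where "k0 = s + r + 3"
  define C where "C = s\<^sup>2 + 2 * s + s * r - 1"
  have "2 * r \<le> r\<^sup>2" using \<open>2 \<le> r\<close> by (simp add: power2_eq_square)
  have "4 * r \<le> r ^ 3"
  proof -
    have "2 * r * 2 \<le> r\<^sup>2 * r" using \<open>2 * r \<le> r\<^sup>2\<close> \<open>2 \<le> r\<close> by (intro mult_mono) auto
    then show ?thesis by (simp add: power2_eq_square power3_eq_cube)
  qed
  have "4 \<le> s" using assms(1,2) \<open>2 * r \<le> r\<^sup>2\<close> by linarith
  have "0 < r + 2 + s * s * (r\<^sup>2 + 2 * r - s) + s * (r ^ 3 + 5 * r\<^sup>2 + 6 * r - 3 - 4 * s)"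
    using \<open>4 * r \<le> r ^ 3\<close> \<open>4 \<le> s\<close> assms(1,3)
    by (intro add_pos_nonneg add_nonneg_pos mult_nonneg_nonneg mult_pos_pos) auto
  also have "\<dots> = k0\<^sup>2 * u - C * (k0 + u - 1)"
    by (simp add: k0_def u_def C_def power2_eq_square power3_eq_cube algebra_simps)
  finally have C_below: "C * (k0 + u - 1) < k0\<^sup>2 * u" by simp
  have n_le: "n + u - 1 \<le> C"
    using assms(4) by (simp add: u_def C_def)
  have "k < k0"
  proof (rule quadratic_ineq_imp_less)
    show "k\<^sup>2 * u \<le> (n + u - 1) * (k + u - 1)"
      using assms(5) by (simp add: u_def)
    have "(n + u - 1) * (k0 + u - 1) \<le> C * (k0 + u - 1)"
      using n_le \<open>4 \<le> s\<close> \<open>2 \<le> r\<close> by (intro mult_right_mono) (auto simp: k0_def u_def)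
    with C_below show "(n + u - 1) * (k0 + u - 1) < k0\<^sup>2 * u" by linarith
    have "C < s * k0"
      using \<open>4 \<le> s\<close> by (simp add: C_def k0_def power2_eq_square algebra_simps)
    also have "\<dots> \<le> u * k0"
      unfolding u_def using \<open>4 \<le> s\<close> \<open>2 \<le> r\<close> by (intro mult_right_mono) (auto simp: k0_def)
    finally have "C < u * k0" .
    moreover have "0 \<le> u * k0" and "2 * k0 * u = 2 * (u * k0)"
      using \<open>4 \<le> s\<close> \<open>2 \<le> r\<close> by (simp_all add: u_def k0_def)
    ultimately show "n + u - 1 \<le> 2 * k0 * u"
      using n_le by linarith
    show "0 \<le> u" using \<open>4 \<le> s\<close> \<open>2 \<le> r\<close> by (simp add: u_def)
  qed
  then show ?thesis by (simp add: k0_def)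
qed

lemma le_floor_sqrt:
  fixes m :: int and x :: real
  assumes "0 \<le> m" and "m\<^sup>2 \<le> x"
  shows "m \<le> \<lfloor>sqrt x\<rfloor>"
  using assms by (simp add: le_floor_iff real_le_rsqrt)

lemma floor_sqrt_sandwich:
  fixes n :: int
  assumes "0 \<le> n"
  shows "\<lfloor>sqrt n\<rfloor>\<^sup>2 \<le> n" and "n < (\<lfloor>sqrt n\<rfloor> + 1)\<^sup>2"
proof -
  have "0 \<le> \<lfloor>sqrt n\<rfloor>" and sqrt_sq: "(sqrt n)\<^sup>2 = n"
    using assms by simp_all
  have "(real_of_int \<lfloor>sqrt n\<rfloor>)\<^sup>2 \<le> (sqrt n)\<^sup>2"
    using \<open>0 \<le> \<lfloor>sqrt n\<rfloor>\<close> by (intro power_mono) simp_all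
  then show "\<lfloor>sqrt n\<rfloor>\<^sup>2 \<le> n"
    unfolding sqrt_sq by (simp only: of_int_power[symmetric] of_int_le_iff)
  have "(sqrt n)\<^sup>2 < (real_of_int (\<lfloor>sqrt n\<rfloor> + 1))\<^sup>2"
    using assms by (intro power_strict_mono) simp_all
  then show "n < (\<lfloor>sqrt n\<rfloor> + 1)\<^sup>2"
    unfolding sqrt_sq by (simp only: of_int_power[symmetric] of_int_less_iff)
qed

lemma h_attained: "\<exists>A. A \<subseteq> {1..int N} \<and> sidon A \<and> card A = h N"
proof -
  define S where "S = {card A | A. A \<subseteq> {1..int N} \<and> sidon A}"
  have "card A \<le> N" if "A \<subseteq> {1..int N}" for A :: "int set"
    using card_mono[OF _ that] by simp
  then have "S \<subseteq> {..N}"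
    unfolding S_def by blast
  then have "finite S" by (rule finite_subset) simp
  moreover have "S \<noteq> {}"
    unfolding S_def using sidon_def by blast
  ultimately have "Max S \<in> S" by (rule Max_in)
  then show ?thesis by (auto simp: S_def h_def)
qed

lemma sidon_card_le_floor_sqrt:
  fixes N :: nat
  assumes "16 \<le> N" and "sidon A" and "A \<subseteq> {1..int N}"
  shows "int (card A) \<le> \<lfloor>sqrt N\<rfloor> + \<lfloor>sqrt \<lfloor>sqrt N\<rfloor>\<rfloor> + 2"
proof -
  define s where "s = \<lfloor>sqrt N\<rfloor>"
  define r where "r = \<lfloor>sqrt s\<rfloor>"
  define u where "u = nat (s * r)"
  have "4 \<le> s" unfolding s_def using assms(1) by (intro le_floor_sqrt) auto
  have "2 \<le> r" unfolding r_def using \<open>4 \<le> s\<close> by (intro le_floor_sqrt) auto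
  have "int N < (s + 1)\<^sup>2"
    using floor_sqrt_sandwich(2)[of "int N"] by (simp add: s_def)
  have r_bounds: "r\<^sup>2 \<le> s" "s < (r + 1)\<^sup>2"
    using floor_sqrt_sandwich[of s] \<open>4 \<le> s\<close> by (simp_all add: r_def)
  have "4 * 2 \<le> s * r"
    using \<open>4 \<le> s\<close> \<open>2 \<le> r\<close> by (intro mult_mono) auto
  then have "int u = s * r" and "1 \<le> u"
    by (simp_all add: u_def)
  have "int ((card A)\<^sup>2 * u) \<le> int ((N + u - 1) * (card A + u - 1))"
    using sidon_window_inequality[OF assms(2,3) \<open>1 \<le> u\<close>] by (simp only: of_nat_le_iff)
  then have "(int (card A))\<^sup>2 * (s * r) \<le> (int N + s * r - 1) * (int (card A) + s * r - 1)"
    using \<open>int u = s * r\<close> \<open>1 \<le> u\<close> by (simp add: of_nat_diff)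
  then have "int (card A) \<le> s + r + 2"
    using \<open>2 \<le> r\<close> r_bounds \<open>int N < (s + 1)\<^sup>2\<close>
    by (intro card_bound_from_window_inequality[of r s "int N"]) (auto simp: power2_eq_square algebra_simps)
  then show ?thesis by (simp add: s_def r_def)
qed

theorem mainTheorem9:
  fixes N :: nat
  assumes "N \<ge> 16"
  shows "int (h N) \<le> \<lfloor>sqrt (real N)\<rfloor> + \<lfloor>sqrt (real_of_int \<lfloor>sqrt (real N)\<rfloor>)\<rfloor> + 2"
proof -
  obtain A where "A \<subseteq> {1..int N}" and "sidon A" and "card A = h N"
    using h_attained by blast
  with sidon_card_le_floor_sqrt[OF assms] show ?thesis by metis
qed

end
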